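(* Let $\mathbf C=\{C_t\}_{t\in[0,1]}$ and $\mathbf C'=\{C'_t\}_{t\in[0,1]}$ be two families of bivariate copulas such that $C_t\preceq C'_t$ for every $t\in[0,1]$. Then for all bivariate copulas $A$ and $B$, $A\star_{\mathbf C}B\preceq A\star_{\mathbf C'}B$ (concordance order of $3$-copulas).
   Context: A bivariate copula is a map $C:[0,1]^2\to[0,1]$ with $C(u,0)=C(0,u)=0$, $C(u,1)=C(1,u)=u$, and $2$-increasing. For bivariate copulas $C,C'$, $C\preceq C'$ means $C(u_1,u_2)\le C'(u_1,u_2)$ for all $(u_1,u_2)\in[0,1]^2$. For $3$-copulas $D,D'$ (distribution functions on $[0,1]^3$ with uniform $[0,1]$ one-dimensional marginals), $D\preceq D'$ means $D(\mathbf u)\le D'(\mathbf u)$ and $\overline D(\mathbf u)\le\overline{D'}(\mathbf u)$ for all $\mathbf u\in[0,1]^3$, where $\overline D(u_1,u_2,u_3)=1-u_1-u_2-u_3+D(u_1,u_2,1)+D(u_1,1,u_3)+D(1,u_2,u_3)-D(u_1,u_2,u_3)$. For bivariate copulas $A,B$ and a family $\mathbf C=\{C_t\}$ of bivariate copulas, $(A\star_{\mathbf C} B)(u_1,u_2,u_3)=\int_{0}^{u_2} C_t\!\left(\tfrac{\partial}{\partial t} A(u_1,t),\tfrac{\partial}{\partial t} B(t,u_3)\right) dt$ (partial derivatives existing a.e.); this is a $3$-copula. *)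

theory Defs
  imports "HOL-Analysis.Analysis"
begin

text \<open>Bivariate copula; only its values on the unit square are constrained.\<close>
definition copula2 :: "(real \<Rightarrow> real \<Rightarrow> real) \<Rightarrow> bool" where
  "copula2 C \<longleftrightarrow>
     (\<forall>u\<in>{0..1}. C u 0 = 0 \<and> C 0 u = 0 \<and> C u 1 = u \<and> C 1 u = u) \<and>
     (\<forall>u1\<in>{0..1}. \<forall>u2\<in>{0..1}. \<forall>v1\<in>{0..1}. \<forall>v2\<in>{0..1}.
        u1 \<le> u2 \<longrightarrow> v1 \<le> v2 \<longrightarrow> C u2 v2 - C u2 v1 - C u1 v2 + C u1 v1 \<ge> 0)"

definition copula2_le :: "(real \<Rightarrow> real \<Rightarrow> real) \<Rightarrow> (real \<Rightarrow> real \<Rightarrow> real) \<Rightarrow> bool" where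
  "copula2_le C C' \<longleftrightarrow> (\<forall>u1\<in>{0..1}. \<forall>u2\<in>{0..1}. C u1 u2 \<le> C' u1 u2)"

definition surv3 :: "(real \<Rightarrow> real \<Rightarrow> real \<Rightarrow> real) \<Rightarrow> real \<Rightarrow> real \<Rightarrow> real \<Rightarrow> real" where
  "surv3 D u1 u2 u3 = 1 - u1 - u2 - u3 + D u1 u2 1 + D u1 1 u3 + D 1 u2 u3 - D u1 u2 u3"

definition conc_le3 :: "(real \<Rightarrow> real \<Rightarrow> real \<Rightarrow> real) \<Rightarrow> (real \<Rightarrow> real \<Rightarrow> real \<Rightarrow> real) \<Rightarrow> bool" where
  "conc_le3 D D' \<longleftrightarrow> (\<forall>u1\<in>{0..1}. \<forall>u2\<in>{0..1}. \<forall>u3\<in>{0..1}.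
      D u1 u2 u3 \<le> D' u1 u2 u3 \<and> surv3 D u1 u2 u3 \<le> surv3 D' u1 u2 u3)"

text \<open>Derivative of a real function at a point where it exists (0 elsewhere; a null set for copula sections).\<close>
definition deriv_ae :: "(real \<Rightarrow> real) \<Rightarrow> real \<Rightarrow> real" where
  "deriv_ae f t = (if f differentiable (at t) then deriv f t else 0)"

definition star_prod :: "(real \<Rightarrow> real \<Rightarrow> real \<Rightarrow> real) \<Rightarrow> (real \<Rightarrow> real \<Rightarrow> real)
     \<Rightarrow> (real \<Rightarrow> real \<Rightarrow> real) \<Rightarrow> real \<Rightarrow> real \<Rightarrow> real \<Rightarrow> real" where
  "star_prod C A B u1 u2 u3 =
     integral\<^sup>L (lebesgue_on {0..u2})
       (\<lambda>t. C t (deriv_ae (\<lambda>s. A u1 s) t) (deriv_ae (\<lambda>s. B s u3) t))"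

end

theory Submission
  imports Defs
begin

text \<open>Both products integrate over \<open>[0, u\<^sub>2]\<close> the integrands
  \<open>C\<^sub>t(a(t), b(t))\<close> and \<open>C'\<^sub>t(a(t), b(t))\<close>, where \<open>a, b\<close> are the partial derivatives of the
  sections of \<open>A\<close> and \<open>B\<close>; these lie in \<open>[0, 1]\<close> because copula sections are increasing and
  1-Lipschitz, so the first integrand lies below the second. For the
  survival functions, \<open>D(u\<^sub>1, u\<^sub>2, 1)\<close> and \<open>D(1, u\<^sub>2, u\<^sub>3)\<close> do not depend on the family, since
  \<open>C\<^sub>t(a, 1) = a\<close> and \<open>C\<^sub>t(1, b) = b\<close>, while \<open>D(u\<^sub>1, 1, u\<^sub>3) - D(u\<^sub>1, u\<^sub>2, u\<^sub>3)\<close> is the integral of the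
  same integrand over \<open>(u\<^sub>2, 1]\<close>. The real work is integrability: derivatives of continuous
  functions are Borel, and \<open>t \<mapsto> C\<^sub>t(a(t), b(t))\<close> is measurable since each \<open>C\<^sub>t\<close> is Lipschitz.\<close>

lemma copula2_boundary:
  assumes "copula2 K" "u \<in> {0..1}"
  shows "K u 0 = 0" "K 0 u = 0" "K u 1 = u" "K 1 u = u"
  using assms unfolding copula2_def by auto

lemma copula2_rectangle_nonneg:
  assumes "copula2 K" "u1 \<in> {0..1}" "u2 \<in> {0..1}" "v1 \<in> {0..1}" "v2 \<in> {0..1}"
    and "u1 \<le> u2" "v1 \<le> v2"
  shows "K u2 v2 - K u2 v1 - K u1 v2 + K u1 v1 \<ge> 0"
  using assms unfolding copula2_def by blast

lemma copula2_increments_fst: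
  assumes K: "copula2 K" and u: "u \<in> {0..1}" "u' \<in> {0..1}" "u \<le> u'" and v: "v \<in> {0..1}"
  shows "K u v \<le> K u' v" "K u' v - K u v \<le> u' - u"
  using copula2_rectangle_nonneg[OF K, of u u' 0 v] copula2_rectangle_nonneg[OF K, of u u' v 1]
    copula2_boundary[OF K] u v by auto

lemma copula2_increments_snd:
  assumes K: "copula2 K" and v: "v \<in> {0..1}" "v' \<in> {0..1}" "v \<le> v'" and u: "u \<in> {0..1}"
  shows "K u v \<le> K u v'" "K u v' - K u v \<le> v' - v"
  using copula2_rectangle_nonneg[OF K, of 0 u v v'] copula2_rectangle_nonneg[OF K, of u 1 v v']
    copula2_boundary[OF K] u v by auto

lemma copula2_lipschitz:
  assumes K: "copula2 K" and "u \<in> {0..1}" "u' \<in> {0..1}" "v \<in> {0..1}" "v' \<in> {0..1}"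
  shows "\<bar>K u v - K u' v'\<bar> \<le> \<bar>u - u'\<bar> + \<bar>v - v'\<bar>"
proof -
  have "\<bar>K u v - K u' v\<bar> \<le> \<bar>u - u'\<bar>"
    using copula2_increments_fst[OF K, of u u' v] copula2_increments_fst[OF K, of u' u v] assms
    by (cases "u \<le> u'") auto
  moreover have "\<bar>K u' v - K u' v'\<bar> \<le> \<bar>v - v'\<bar>"
    using copula2_increments_snd[OF K, of v v' u'] copula2_increments_snd[OF K, of v' v u'] assms
    by (cases "v \<le> v'") auto
  ultimately show ?thesis by linarith
qed

lemma copula2_range:
  assumes K: "copula2 K" and "u \<in> {0..1}" "v \<in> {0..1}"
  shows "K u v \<in> {0..1}"
  using copula2_increments_fst[OF K, of 0 u v] copula2_increments_fst[OF K, of u 1 v]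
    copula2_boundary[OF K] assms by auto

lemma deriv_ae_eqI:
  assumes "DERIV f t :> D"
  shows "deriv_ae f t = D"
  using assms DERIV_imp_deriv real_differentiable_def by (fastforce simp: deriv_ae_def)

lemma deriv_ae_cong_open:
  fixes f g :: "real \<Rightarrow> real"
  assumes "open S" "t \<in> S" "\<And>x. x \<in> S \<Longrightarrow> f x = g x"
  shows "deriv_ae f t = deriv_ae g t"
proof -
  have "DERIV f t :> D \<longleftrightarrow> DERIV g t :> D" for D
    using has_field_derivative_transform_within_open[OF _ assms(1,2), of f D g]
      has_field_derivative_transform_within_open[OF _ assms(1,2), of g D f] assms(3) by auto
  then show ?thesis
    by (metis deriv_ae_def deriv_ae_eqI real_differentiable_def)
qed

lemma deriv_ae_mono_lipschitz_range:
  fixes f :: "real \<Rightarrow> real"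
  assumes incr: "\<And>x y. x \<in> {0..1} \<Longrightarrow> y \<in> {0..1} \<Longrightarrow> x \<le> y \<Longrightarrow> f x \<le> f y \<and> f y - f x \<le> y - x"
    and t: "t \<in> {0<..<1}"
  shows "deriv_ae f t \<in> {0..1}"
proof (cases "f differentiable (at t)")
  case True
  then have "DERIV f t :> deriv f t" using DERIV_deriv_iff_real_differentiable by blast
  then have lim: "((\<lambda>h. (f (t + h) - f t) / h) \<longlongrightarrow> deriv f t) (at_right 0)"
    unfolding DERIV_def using filterlim_at_split by blast
  have "\<forall>\<^sub>F h in at_right 0. h < 1 - t"
    using t eventually_at_right_real[of 0 "1 - t"] by (auto elim: eventually_mono)
  then have "\<forall>\<^sub>F h in at_right 0. (f (t + h) - f t) / h \<in> {0..1}"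
    using eventually_at_right_less[of 0]
  proof eventually_elim
    case (elim h)
    then show ?case using incr[of t "t + h"] t by (auto simp: divide_simps)
  qed
  then have "0 \<le> deriv f t" "deriv f t \<le> 1"
    by (auto intro!: tendsto_lowerbound[OF lim] tendsto_upperbound[OF lim] elim: eventually_mono)
  then show ?thesis using True by (simp add: deriv_ae_def)
qed (simp add: deriv_ae_def)

definition diff_quot :: "(real \<Rightarrow> real) \<Rightarrow> real \<Rightarrow> real \<Rightarrow> real" where
  "diff_quot g t h = (g (t + h) - g t) / h"

text \<open>The Cauchy criterion for the difference quotients at rational increments: a countable,
  hence Borel, condition on \<open>t\<close>, which for continuous \<open>g\<close> characterises differentiability.\<close>
definition rat_diff_quot_cauchy :: "(real \<Rightarrow> real) \<Rightarrow> real \<Rightarrow> bool" where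
  "rat_diff_quot_cauchy g t \<longleftrightarrow> (\<forall>m::nat. \<exists>k::nat. \<forall>p q::rat. p \<noteq> 0 \<longrightarrow> q \<noteq> 0 \<longrightarrow>
      \<bar>of_rat p\<bar> < 1 / (real k + 1) \<longrightarrow> \<bar>of_rat q\<bar> < 1 / (real k + 1) \<longrightarrow>
      \<bar>diff_quot g t (of_rat p) - diff_quot g t (of_rat q)\<bar> \<le> 1 / (real m + 1))"

lemma DERIV_iff_diff_quot_tendsto: "DERIV g t :> D \<longleftrightarrow> (diff_quot g t \<longlongrightarrow> D) (at 0)"
  unfolding DERIV_def diff_quot_def[abs_def] ..

lemma ex_inverse_Suc_less: "0 < (e::real) \<Longrightarrow> \<exists>k::nat. 1 / (real k + 1) < e"
  using reals_Archimedean[of e] by (auto simp: field_simps)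

lemma differentiable_imp_rat_diff_quot_cauchy:
  assumes "g differentiable at t"
  shows "rat_diff_quot_cauchy g t"
  unfolding rat_diff_quot_cauchy_def
proof
  fix m :: nat
  obtain D where "(diff_quot g t \<longlongrightarrow> D) (at 0)"
    using assms DERIV_iff_diff_quot_tendsto real_differentiable_def by blast
  then obtain d where d: "d > 0" "\<And>h. h \<noteq> 0 \<Longrightarrow> \<bar>h\<bar> < d \<Longrightarrow> \<bar>diff_quot g t h - D\<bar> < 1 / (2 * (real m + 1))"
    unfolding LIM_eq by (metis diff_zero divide_pos_pos of_nat_0_le_iff real_norm_def
        add_nonneg_pos zero_less_mult_iff zero_less_one zero_less_numeral)
  obtain k :: nat where k: "1 / (real k + 1) < d" using ex_inverse_Suc_less[OF d(1)] by blast
  have "\<bar>diff_quot g t h - diff_quot g t h'\<bar> \<le> 1 / (real m + 1)"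
    if "h \<noteq> 0" "h' \<noteq> 0" "\<bar>h\<bar> < 1 / (real k + 1)" "\<bar>h'\<bar> < 1 / (real k + 1)" for h h'
  proof -
    have "\<bar>diff_quot g t h - D\<bar> < 1 / (2 * (real m + 1))" "\<bar>diff_quot g t h' - D\<bar> < 1 / (2 * (real m + 1))"
      using d(2)[of h] d(2)[of h'] that k by auto
    moreover have "1 / (2 * (real m + 1)) + 1 / (2 * (real m + 1)) = 1 / (real m + 1)"
      by (simp add: field_simps)
    ultimately show ?thesis by (smt (verit))
  qed
  then show "\<exists>k::nat. \<forall>p q::rat. p \<noteq> 0 \<longrightarrow> q \<noteq> 0 \<longrightarrow>
      \<bar>of_rat p\<bar> < 1 / (real k + 1) \<longrightarrow> \<bar>of_rat q\<bar> < 1 / (real k + 1) \<longrightarrow>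
      \<bar>diff_quot g t (of_rat p) - diff_quot g t (of_rat q)\<bar> \<le> 1 / (real m + 1)"
    by (metis of_rat_eq_0_iff)
qed

lemma punctured_rat_approx:
  fixes f :: "real \<Rightarrow> real"
  assumes "isCont f h" "h \<noteq> 0" "\<bar>h\<bar> < r" "0 < e"
  shows "\<exists>p::rat. p \<noteq> 0 \<and> \<bar>of_rat p\<bar> < r \<and> \<bar>f (of_rat p) - f h\<bar> < e"
proof -
  obtain d where d: "d > 0" "\<And>x. x \<noteq> h \<Longrightarrow> \<bar>x - h\<bar> < d \<Longrightarrow> \<bar>f x - f h\<bar> < e"
    using assms(1,4) unfolding isCont_def LIM_eq by (metis real_norm_def)
  define d' where "d' = min d (min \<bar>h\<bar> (r - \<bar>h\<bar>))"
  have "d' > 0" using d assms(2,3) by (auto simp: d'_def)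
  then obtain x where x: "x \<in> \<rat>" "h < x" "x < h + d'" using Rats_dense_in_real[of h "h + d'"] by auto
  then obtain p where "x = of_rat p" using Rats_cases by blast
  moreover have "x \<noteq> 0" "\<bar>x\<bar> < r" using x assms(2) unfolding d'_def by (cases "h > 0"; auto)+
  moreover have "\<bar>f x - f h\<bar> < e" using d(2)[of x] x unfolding d'_def by auto
  ultimately show ?thesis by auto
qed

lemma rat_diff_quot_cauchy_imp_cauchy:
  assumes cont: "continuous_on UNIV g" and cauchy: "rat_diff_quot_cauchy g t" and e: "0 < e"
  shows "\<exists>d>0. \<forall>h h'. h \<noteq> 0 \<longrightarrow> h' \<noteq> 0 \<longrightarrow> \<bar>h\<bar> < d \<longrightarrow> \<bar>h'\<bar> < d \<longrightarrow>
      \<bar>diff_quot g t h - diff_quot g t h'\<bar> < e"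
proof -
  obtain m :: nat where m: "1 / (real m + 1) < e" using ex_inverse_Suc_less[OF e] by blast
  obtain k :: nat where k: "\<And>p q::rat. p \<noteq> 0 \<Longrightarrow> q \<noteq> 0 \<Longrightarrow>
      \<bar>of_rat p\<bar> < 1 / (real k + 1) \<Longrightarrow> \<bar>of_rat q\<bar> < 1 / (real k + 1) \<Longrightarrow>
      \<bar>diff_quot g t (of_rat p) - diff_quot g t (of_rat q)\<bar> \<le> 1 / (real m + 1)"
    using cauchy unfolding rat_diff_quot_cauchy_def by blast
  have "\<bar>diff_quot g t h - diff_quot g t h'\<bar> \<le> 1 / (real m + 1)"
    if h: "h \<noteq> 0" "h' \<noteq> 0" "\<bar>h\<bar> < 1 / (real k + 1)" "\<bar>h'\<bar> < 1 / (real k + 1)" for h h'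
  proof (rule field_le_epsilon)
    fix \<epsilon> :: real assume "0 < \<epsilon>"
    have "isCont (\<lambda>x. g (t + x)) x" for x
      using continuous_on_compose2[OF cont, of UNIV "\<lambda>x. t + x"]
      by (simp add: continuous_on_add continuous_on_eq_continuous_at)
    then have "isCont (diff_quot g t) x" if "x \<noteq> 0" for x
      using that unfolding diff_quot_def[abs_def] by (intro continuous_intros) auto
    then obtain p q :: rat where
      "p \<noteq> 0" "\<bar>of_rat p\<bar> < 1 / (real k + 1)" "\<bar>diff_quot g t (of_rat p) - diff_quot g t h\<bar> < \<epsilon> / 2"
      "q \<noteq> 0" "\<bar>of_rat q\<bar> < 1 / (real k + 1)" "\<bar>diff_quot g t (of_rat q) - diff_quot g t h'\<bar> < \<epsilon> / 2"
      using punctured_rat_approx[where f="diff_quot g t" and h=h and e="\<epsilon> / 2"]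
        punctured_rat_approx[where f="diff_quot g t" and h=h' and e="\<epsilon> / 2"] h \<open>0 < \<epsilon>\<close>
      by (metis half_gt_zero)
    with k[of p q] show "\<bar>diff_quot g t h - diff_quot g t h'\<bar> \<le> 1 / (real m + 1) + \<epsilon>"
      by linarith
  qed
  then show ?thesis using m by (intro exI[of _ "1 / (real k + 1)"]) force
qed

lemma rat_diff_quot_cauchy_imp_differentiable:
  assumes "continuous_on UNIV g" "rat_diff_quot_cauchy g t"
  shows "g differentiable at t"
proof -
  have "cauchy_filter (filtermap (diff_quot g t) (at 0))"
    unfolding cauchy_filter_metric_filtermap
  proof (intro allI impI)
    fix e :: real assume "0 < e"
    then obtain d where "d > 0" and d: "\<forall>h h'. h \<noteq> 0 \<longrightarrow> h' \<noteq> 0 \<longrightarrow> \<bar>h\<bar> < d \<longrightarrow> \<bar>h'\<bar> < d \<longrightarrow>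
        \<bar>diff_quot g t h - diff_quot g t h'\<bar> < e"
      using rat_diff_quot_cauchy_imp_cauchy[OF assms] by blast
    have "eventually (\<lambda>h. h \<noteq> 0 \<and> \<bar>h\<bar> < d) (at (0::real))"
      using \<open>d > 0\<close> by (auto simp: eventually_at dist_real_def)
    then show "\<exists>P. eventually P (at 0) \<and> (\<forall>h h'. P h \<and> P h' \<longrightarrow> dist (diff_quot g t h) (diff_quot g t h') < e)"
      using d by (auto simp: dist_real_def)
  qed
  moreover have "filtermap (diff_quot g t) (at 0) \<noteq> bot"
    by (simp add: filtermap_bot_iff)
  ultimately obtain D where "filtermap (diff_quot g t) (at 0) \<le> nhds D"
    using cauchy_filter_complete_converges[OF _ complete_UNIV] by auto
  then have "DERIV g t :> D" by (simp add: DERIV_iff_diff_quot_tendsto filterlim_def)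
  then show ?thesis using real_differentiable_def by blast
qed

lemma deriv_ae_borel_measurable:
  assumes cont: "continuous_on UNIV g"
  shows "deriv_ae g \<in> borel_measurable borel"
proof (rule borel_measurable_LIMSEQ_real)
  have [measurable]: "g \<in> borel_measurable borel" using borel_measurable_continuous_onI[OF cont] .
  have [measurable]: "Measurable.pred borel (rat_diff_quot_cauchy g)"
    unfolding rat_diff_quot_cauchy_def[abs_def] diff_quot_def by measurable
  show "(\<lambda>t. if rat_diff_quot_cauchy g t then diff_quot g t (1 / (real n + 1)) else 0)
      \<in> borel_measurable borel" for n
    unfolding diff_quot_def by measurable
  fix t
  have seq: "filterlim (\<lambda>n::nat. 1 / (real n + 1)) (at 0) sequentially"
    using LIMSEQ_inverse_real_of_nat by (simp add: filterlim_at inverse_eq_divide add.commute)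
  show "(\<lambda>n. if rat_diff_quot_cauchy g t then diff_quot g t (1 / (real n + 1)) else 0)
      \<longlonglongrightarrow> deriv_ae g t"
  proof (cases "g differentiable at t")
    case True
    then have "(diff_quot g t \<longlongrightarrow> deriv g t) (at 0)"
      using DERIV_deriv_iff_real_differentiable DERIV_iff_diff_quot_tendsto by blast
    from filterlim_compose[OF this seq] True show ?thesis
      by (simp add: differentiable_imp_rat_diff_quot_cauchy deriv_ae_def)
  next
    case False
    then have "\<not> rat_diff_quot_cauchy g t"
      using rat_diff_quot_cauchy_imp_differentiable[OF cont] by blast
    with False show ?thesis by (simp add: deriv_ae_def)
  qed
qed

lemma measurable_lebesgue_on_unit_interval_interior:
  fixes f h :: "real \<Rightarrow> real"
  assumes [measurable]: "h \<in> borel_measurable (lebesgue_on {0..1})"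
    and "\<And>t. t \<in> {0<..<1} \<Longrightarrow> f t = h t"
  shows "f \<in> borel_measurable (lebesgue_on {0..1})"
proof -
  have [measurable]: "(\<lambda>t::real. t) \<in> borel_measurable (lebesgue_on {0..1})"
    using id_borel_measurable_lebesgue_on by (simp add: id_def)
  have "(\<lambda>t. if t \<le> 0 then f 0 else if 1 \<le> t then f 1 else h t) \<in> borel_measurable (lebesgue_on {0..1})"
    by measurable
  then show ?thesis
    by (rule measurable_lebesgue_cong[THEN iffD1, rotated]) (use assms(2) in auto)
qed

lemma deriv_ae_measurable_lebesgue_on_unit_interval:
  fixes f :: "real \<Rightarrow> real"
  assumes "continuous_on {0..1} f"
  shows "deriv_ae f \<in> borel_measurable (lebesgue_on {0..1})"
proof (rule measurable_lebesgue_on_unit_interval_interior)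
  define g where "g x = f (max 0 (min 1 x))" for x
  have "continuous_on UNIV g"
    unfolding g_def by (rule continuous_on_compose2[OF assms]) (auto intro!: continuous_intros)
  then show "deriv_ae g \<in> borel_measurable (lebesgue_on {0..1})"
    using measurable_compose[OF id_borel_measurable_lebesgue_on deriv_ae_borel_measurable] by simp
  show "deriv_ae f t = deriv_ae g t" if "t \<in> {0<..<1}" for t
    by (rule deriv_ae_cong_open[of "{0<..<1}"]) (use that in \<open>auto simp: g_def\<close>)
qed

lemma copula2_deriv_fst_range:
  assumes "copula2 K" "v \<in> {0..1}" "t \<in> {0<..<1}"
  shows "deriv_ae (\<lambda>s. K s v) t \<in> {0..1}"
  by (rule deriv_ae_mono_lipschitz_range) (use copula2_increments_fst assms in auto)

lemma copula2_deriv_snd_range: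
  assumes "copula2 K" "u \<in> {0..1}" "t \<in> {0<..<1}"
  shows "deriv_ae (\<lambda>s. K u s) t \<in> {0..1}"
  by (rule deriv_ae_mono_lipschitz_range) (use copula2_increments_snd assms in auto)

lemma copula2_deriv_fst_measurable:
  assumes "copula2 K" "v \<in> {0..1}"
  shows "deriv_ae (\<lambda>s. K s v) \<in> borel_measurable (lebesgue_on {0..1})"
proof (intro deriv_ae_measurable_lebesgue_on_unit_interval lipschitz_on_continuous_on)
  show "1-lipschitz_on {0..1} (\<lambda>s. K s v)"
    by (rule lipschitz_onI) (use copula2_lipschitz[OF assms(1) _ _ assms(2) assms(2)] in \<open>auto simp: dist_real_def\<close>)
qed

lemma copula2_deriv_snd_measurable:
  assumes "copula2 K" "u \<in> {0..1}"
  shows "deriv_ae (\<lambda>s. K u s) \<in> borel_measurable (lebesgue_on {0..1})"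
proof (intro deriv_ae_measurable_lebesgue_on_unit_interval lipschitz_on_continuous_on)
  show "1-lipschitz_on {0..1} (\<lambda>s. K u s)"
    by (rule lipschitz_onI) (use copula2_lipschitz[OF assms(1) assms(2) assms(2)] in \<open>auto simp: dist_real_def\<close>)
qed

definition grid_floor :: "nat \<Rightarrow> real \<Rightarrow> real" where
  "grid_floor n x = of_int \<lfloor>(real n + 1) * x\<rfloor> / (real n + 1)"

lemma grid_floor_bounds:
  assumes "x \<in> {0..1}"
  shows "grid_floor n x \<in> {0..1}" "\<bar>grid_floor n x - x\<bar> \<le> 1 / (real n + 1)"
proof -
  have p: "(0::real) < real n + 1" by simp
  have fl: "of_int \<lfloor>(real n + 1) * x\<rfloor> \<le> (real n + 1) * x" "(real n + 1) * x < of_int \<lfloor>(real n + 1) * x\<rfloor> + 1"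
    by linarith+
  have "(real n + 1) * x \<le> real n + 1" "0 \<le> \<lfloor>(real n + 1) * x\<rfloor>" using assms by auto
  with fl(1) have "0 \<le> real_of_int \<lfloor>(real n + 1) * x\<rfloor>" "real_of_int \<lfloor>(real n + 1) * x\<rfloor> \<le> real n + 1"
    by linarith+
  with p show "grid_floor n x \<in> {0..1}"
    unfolding grid_floor_def by (auto simp: divide_simps)
  have "grid_floor n x - x = (of_int \<lfloor>(real n + 1) * x\<rfloor> - (real n + 1) * x) / (real n + 1)"
    unfolding grid_floor_def using p by (simp add: diff_divide_distrib)
  moreover have "\<bar>real_of_int \<lfloor>(real n + 1) * x\<rfloor> - (real n + 1) * x\<bar> \<le> 1"
    using fl by linarith
  ultimately show "\<bar>grid_floor n x - x\<bar> \<le> 1 / (real n + 1)"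
    using p by (simp add: abs_divide divide_right_mono)
qed

text \<open>Carath\'eodory-type measurability: \<open>C t\<close> is measurable in \<open>t\<close> and (being a copula) Lipschitz
  in its arguments, so it can be evaluated at measurable \<open>a t, b t\<close> through their grid
  approximations, each of which takes only countably many values.\<close>
lemma measurable_copula_family_compose:
  fixes C :: "'a \<Rightarrow> real \<Rightarrow> real \<Rightarrow> real"
  assumes cop: "\<And>t. t \<in> space M \<Longrightarrow> copula2 (C t)"
    and meas: "\<And>u v. (\<lambda>t. C t u v) \<in> borel_measurable M"
    and [measurable]: "a \<in> borel_measurable M" "b \<in> borel_measurable M"
    and ab: "\<And>t. t \<in> space M \<Longrightarrow> a t \<in> {0..1} \<and> b t \<in> {0..1}"
  shows "(\<lambda>t. C t (a t) (b t)) \<in> borel_measurable M"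
proof (rule borel_measurable_LIMSEQ_real)
  fix n :: nat
  define k where "k t = (\<lfloor>(real n + 1) * a t\<rfloor>, \<lfloor>(real n + 1) * b t\<rfloor>)" for t
  have "k \<in> measurable M (count_space UNIV)"
  proof (subst measurable_count_space_eq2_countable, intro conjI ballI)
    fix ij :: "int \<times> int"
    have "k -` {ij} \<inter> space M =
      {t \<in> space M. of_int (fst ij) \<le> (real n + 1) * a t \<and> (real n + 1) * a t < of_int (fst ij) + 1
         \<and> of_int (snd ij) \<le> (real n + 1) * b t \<and> (real n + 1) * b t < of_int (snd ij) + 1}"
      unfolding k_def by (cases ij) (auto simp: floor_eq_iff)
    also have "\<dots> \<in> sets M" by measurable
    finally show "k -` {ij} \<inter> space M \<in> sets M" .
  qed simp
  then have "(\<lambda>t. (\<lambda>ij. C t (of_int (fst ij) / (real n + 1)) (of_int (snd ij) / (real n + 1))) (k t))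
      \<in> borel_measurable M"
    by (rule measurable_compose_countable[rotated]) (use meas in simp)
  then show "(\<lambda>t. C t (grid_floor n (a t)) (grid_floor n (b t))) \<in> borel_measurable M"
    by (simp add: k_def grid_floor_def)
next
  fix t assume t: "t \<in> space M"
  have a: "a t \<in> {0..1}" and b: "b t \<in> {0..1}" using ab[OF t] by auto
  have "\<forall>\<^sub>F n in sequentially.
      norm (C t (grid_floor n (a t)) (grid_floor n (b t)) - C t (a t) (b t)) \<le> 2 * (1 / (real n + 1))"
  proof (intro always_eventually allI)
    fix n
    show "norm (C t (grid_floor n (a t)) (grid_floor n (b t)) - C t (a t) (b t)) \<le> 2 * (1 / (real n + 1))"
      using copula2_lipschitz[OF cop[OF t] grid_floor_bounds(1)[OF a, of n] a grid_floor_bounds(1)[OF b, of n] b]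
        grid_floor_bounds(2)[OF a, of n] grid_floor_bounds(2)[OF b, of n] by simp
  qed
  moreover have "(\<lambda>n. 2 * (1 / (real n + 1))) \<longlonglongrightarrow> 0"
    using tendsto_mult_right_zero[OF LIMSEQ_inverse_real_of_nat] by (simp add: inverse_eq_divide add.commute)
  ultimately have "(\<lambda>n. C t (grid_floor n (a t)) (grid_floor n (b t)) - C t (a t) (b t)) \<longlonglongrightarrow> 0"
    by (rule Lim_null_comparison)
  then show "(\<lambda>n. C t (grid_floor n (a t)) (grid_floor n (b t))) \<longlonglongrightarrow> C t (a t) (b t)"
    by (rule LIM_zero_cancel)
qed

lemma AE_lebesgue_on_unit_interval_interior:
  assumes "S \<subseteq> {0..1}" "S \<in> sets lebesgue"
  shows "AE t in lebesgue_on S. t \<in> {0<..<1::real}"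
proof -
  have "{0, 1::real} \<in> null_sets lebesgue"
    by (rule null_sets_completionI[OF finite_imp_null_set_lborel]) simp
  then have "AE t in lebesgue. t \<in> S \<longrightarrow> t \<in> {0<..<1::real}"
    by (rule AE_I') (use assms(1) in auto)
  then show ?thesis by (subst AE_restrict_space_iff) (use assms(2) in auto)
qed

lemma integrable_lebesgue_on_unit_interval_subset:
  fixes f :: "real \<Rightarrow> real"
  assumes "f \<in> borel_measurable (lebesgue_on {0..1})" "\<And>t. t \<in> {0<..<1} \<Longrightarrow> \<bar>f t\<bar> \<le> c"
    and "S \<subseteq> {0..1}" "S \<in> sets lebesgue"
  shows "integrable (lebesgue_on S) f"
proof (rule finite_measure.integrable_const_bound)
  show "finite_measure (lebesgue_on S)"
    using assms(3,4) by (intro finite_measure_lebesgue_on bounded_set_imp_lmeasurable bounded_subset[OF bounded_closed_interval])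
  show "f \<in> borel_measurable (lebesgue_on S)"
    by (rule measurable_restrict_mono[OF assms(1,3)])
  show "AE t in lebesgue_on S. norm (f t) \<le> c"
    using AE_lebesgue_on_unit_interval_interior[OF assms(3,4)] by eventually_elim (use assms(2) in auto)
qed

lemma integral_lebesgue_on_mono_interior:
  fixes f g :: "real \<Rightarrow> real"
  assumes "f \<in> borel_measurable (lebesgue_on {0..1})" "\<And>t. t \<in> {0<..<1} \<Longrightarrow> \<bar>f t\<bar> \<le> c"
    and "g \<in> borel_measurable (lebesgue_on {0..1})" "\<And>t. t \<in> {0<..<1} \<Longrightarrow> \<bar>g t\<bar> \<le> c"
    and "\<And>t. t \<in> {0<..<1} \<Longrightarrow> f t \<le> g t"
    and "S \<subseteq> {0..1}" "S \<in> sets lebesgue"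
  shows "integral\<^sup>L (lebesgue_on S) f \<le> integral\<^sup>L (lebesgue_on S) g"
  using AE_lebesgue_on_unit_interval_interior[OF assms(6,7)] assms(5)
  by (intro integral_mono_AE integrable_lebesgue_on_unit_interval_subset[OF assms(1,2,6,7)]
      integrable_lebesgue_on_unit_interval_subset[OF assms(3,4,6,7)]) (auto elim: AE_mp)

lemma integral_lebesgue_on_cong_interior:
  fixes f g :: "real \<Rightarrow> real"
  assumes "f \<in> borel_measurable (lebesgue_on {0..1})" "g \<in> borel_measurable (lebesgue_on {0..1})"
    and "\<And>t. t \<in> {0<..<1} \<Longrightarrow> f t = g t"
    and "S \<subseteq> {0..1}" "S \<in> sets lebesgue"
  shows "integral\<^sup>L (lebesgue_on S) f = integral\<^sup>L (lebesgue_on S) g"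
  using AE_lebesgue_on_unit_interval_interior[OF assms(4,5)] assms(3)
  by (intro integral_cong_AE measurable_restrict_mono[OF assms(1,4)] measurable_restrict_mono[OF assms(2,4)])
    (auto elim: AE_mp)

lemma integral_lebesgue_on_unit_interval_split:
  fixes f :: "real \<Rightarrow> real"
  assumes "f \<in> borel_measurable (lebesgue_on {0..1})" "\<And>t. t \<in> {0<..<1} \<Longrightarrow> \<bar>f t\<bar> \<le> c"
    and "v \<in> {0..1}"
  shows "integral\<^sup>L (lebesgue_on {0..1}) f = integral\<^sup>L (lebesgue_on {0..v}) f + integral\<^sup>L (lebesgue_on {v<..1}) f"
proof -
  have integrable: "set_integrable lebesgue S f" if "S \<subseteq> {0..1}" "S \<in> sets lebesgue" for S
    using integrable_lebesgue_on_unit_interval_subset[OF assms(1,2) that]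
    by (simp add: set_integrable_def integrable_restrict_space that(2))
  then have "(LINT t:{0..v} \<union> {v<..1}|lebesgue. f t) = (LINT t:{0..v}|lebesgue. f t) + (LINT t:{v<..1}|lebesgue. f t)"
    using assms(3) by (intro set_integral_Un integrable) auto
  moreover have "{0..v} \<union> {v<..1} = {0..1}" using assms(3) by auto
  ultimately show ?thesis by (simp add: integral_restrict_space set_lebesgue_integral_def)
qed

lemma integral_lebesgue_on_tail_mono_interior:
  fixes f g :: "real \<Rightarrow> real"
  assumes "f \<in> borel_measurable (lebesgue_on {0..1})" "\<And>t. t \<in> {0<..<1} \<Longrightarrow> \<bar>f t\<bar> \<le> c"
    and "g \<in> borel_measurable (lebesgue_on {0..1})" "\<And>t. t \<in> {0<..<1} \<Longrightarrow> \<bar>g t\<bar> \<le> c"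
    and "\<And>t. t \<in> {0<..<1} \<Longrightarrow> f t \<le> g t"
    and "v \<in> {0..1}"
  shows "integral\<^sup>L (lebesgue_on {0..1}) f - integral\<^sup>L (lebesgue_on {0..v}) f
    \<le> integral\<^sup>L (lebesgue_on {0..1}) g - integral\<^sup>L (lebesgue_on {0..v}) g"
proof -
  have "{v<..1} \<subseteq> {0..1}" using assms(6) by auto
  from integral_lebesgue_on_mono_interior[OF assms(1-5) this] show ?thesis
    using integral_lebesgue_on_unit_interval_split[OF assms(1,2,6)]
      integral_lebesgue_on_unit_interval_split[OF assms(3,4,6)] by simp
qed

text \<open>At \<open>t = 0, 1\<close> the value of \<open>deriv_ae\<close> depends on the copulas outside the unit square, so
  the integrand is only controlled on the open interval, which has full measure.\<close>
definition star_integrand :: "(real \<Rightarrow> real \<Rightarrow> real \<Rightarrow> real) \<Rightarrow> (real \<Rightarrow> real \<Rightarrow> real)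
    \<Rightarrow> (real \<Rightarrow> real \<Rightarrow> real) \<Rightarrow> real \<Rightarrow> real \<Rightarrow> real \<Rightarrow> real" where
  "star_integrand C A B u1 u3 t = C t (deriv_ae (\<lambda>s. A u1 s) t) (deriv_ae (\<lambda>s. B s u3) t)"

lemma star_prod_eq_integral:
  "star_prod C A B u1 u2 u3 = integral\<^sup>L (lebesgue_on {0..u2}) (star_integrand C A B u1 u3)"
  unfolding star_prod_def star_integrand_def[abs_def] ..

lemma star_integrand_range:
  assumes "\<forall>t\<in>{0..1}. copula2 (C t)" "copula2 A" "copula2 B" "u1 \<in> {0..1}" "u3 \<in> {0..1}"
    and "t \<in> {0<..<1}"
  shows "star_integrand C A B u1 u3 t \<in> {0..1}"
proof -
  have "copula2 (C t)" using assms(1,6) by auto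
  then show ?thesis
    unfolding star_integrand_def
    by (rule copula2_range[OF _ copula2_deriv_snd_range[OF assms(2,4,6)] copula2_deriv_fst_range[OF assms(3,5,6)]])
qed

lemma star_integrand_measurable:
  assumes cop: "\<forall>t\<in>{0..1}. copula2 (C t)"
    and meas: "\<forall>u v. (\<lambda>t. C t u v) \<in> borel_measurable (lebesgue_on {0..1})"
    and A: "copula2 A" and B: "copula2 B" and "u1 \<in> {0..1}" "u3 \<in> {0..1}"
  shows "star_integrand C A B u1 u3 \<in> borel_measurable (lebesgue_on {0..1})"
proof (rule measurable_lebesgue_on_unit_interval_interior)
  define clamp :: "real \<Rightarrow> real" where "clamp x = max 0 (min 1 x)" for x
  define a where "a = deriv_ae (\<lambda>s. A u1 s)"
  define b where "b = deriv_ae (\<lambda>s. B s u3)"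
  have [measurable]: "a \<in> borel_measurable (lebesgue_on {0..1})" "b \<in> borel_measurable (lebesgue_on {0..1})"
    unfolding a_def b_def using assms by (auto intro: copula2_deriv_snd_measurable copula2_deriv_fst_measurable)
  have "(\<lambda>t. clamp (a t)) \<in> borel_measurable (lebesgue_on {0..1})"
    "(\<lambda>t. clamp (b t)) \<in> borel_measurable (lebesgue_on {0..1})"
    unfolding clamp_def by measurable
  then show "(\<lambda>t. C t (clamp (a t)) (clamp (b t))) \<in> borel_measurable (lebesgue_on {0..1})"
    by (rule measurable_copula_family_compose[rotated 2]) (use cop meas in \<open>auto simp: clamp_def\<close>)
  show "star_integrand C A B u1 u3 t = C t (clamp (a t)) (clamp (b t))" if "t \<in> {0<..<1}" for t
    using copula2_deriv_snd_range[OF A _ that] copula2_deriv_fst_range[OF B _ that] assms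
    by (simp add: star_integrand_def clamp_def a_def b_def)
qed

lemma deriv_ae_eq_one_interior:
  assumes "\<And>x. x \<in> {0<..<1} \<Longrightarrow> f x = x" "t \<in> {0<..<1}"
  shows "deriv_ae f t = 1"
  using deriv_ae_cong_open[of "{0<..<1}" t f "\<lambda>x. x"] deriv_ae_eqI[OF DERIV_ident] assms by simp

lemma star_integrand_snd_one:
  assumes "\<forall>t\<in>{0..1}. copula2 (C t)" "copula2 A" "copula2 B" "u1 \<in> {0..1}" "t \<in> {0<..<1}"
  shows "star_integrand C A B u1 1 t = deriv_ae (\<lambda>s. A u1 s) t"
proof -
  have "copula2 (C t)" using assms(1,5) by auto
  moreover have "deriv_ae (\<lambda>s. B s 1) t = 1"
    using copula2_boundary(3)[OF assms(3)] by (intro deriv_ae_eq_one_interior[OF _ assms(5)]) auto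
  ultimately show ?thesis
    using copula2_boundary(3)[OF _ copula2_deriv_snd_range[OF assms(2,4,5)]] by (simp add: star_integrand_def)
qed

lemma star_integrand_fst_one:
  assumes "\<forall>t\<in>{0..1}. copula2 (C t)" "copula2 A" "copula2 B" "u3 \<in> {0..1}" "t \<in> {0<..<1}"
  shows "star_integrand C A B 1 u3 t = deriv_ae (\<lambda>s. B s u3) t"
proof -
  have "copula2 (C t)" using assms(1,5) by auto
  moreover have "deriv_ae (\<lambda>s. A 1 s) t = 1"
    using copula2_boundary(4)[OF assms(2)] by (intro deriv_ae_eq_one_interior[OF _ assms(5)]) auto
  ultimately show ?thesis
    using copula2_boundary(4)[OF _ copula2_deriv_fst_range[OF assms(3,4,5)]] by (simp add: star_integrand_def)
qed

lemma star_integrand_mono: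
  assumes "\<forall>t\<in>{0..1}. copula2_le (C t) (C' t)" "copula2 A" "copula2 B" "u1 \<in> {0..1}" "u3 \<in> {0..1}"
    and "t \<in> {0<..<1}"
  shows "star_integrand C A B u1 u3 t \<le> star_integrand C' A B u1 u3 t"
proof -
  have "copula2_le (C t) (C' t)" using assms(1,6) by auto
  then show ?thesis
    using copula2_deriv_snd_range[OF assms(2,4,6)] copula2_deriv_fst_range[OF assms(3,5,6)]
    unfolding star_integrand_def copula2_le_def by blast
qed

theorem proposition3p4:
  fixes C C' :: "real \<Rightarrow> real \<Rightarrow> real \<Rightarrow> real"
    and A B :: "real \<Rightarrow> real \<Rightarrow> real"
  assumes "\<forall>t\<in>{0..1}. copula2 (C t)"
    and "\<forall>t\<in>{0..1}. copula2 (C' t)"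
    and "\<forall>u v. (\<lambda>t. C t u v) \<in> borel_measurable (lebesgue_on {0..1})"
    and "\<forall>u v. (\<lambda>t. C' t u v) \<in> borel_measurable (lebesgue_on {0..1})"
    and "\<forall>t\<in>{0..1}. copula2_le (C t) (C' t)"
    and "copula2 A" and "copula2 B"
  shows "conc_le3 (star_prod C A B) (star_prod C' A B)"
  unfolding conc_le3_def
proof (intro ballI conjI)
  fix u1 u2 u3 :: real assume u: "u1 \<in> {0..1}" "u2 \<in> {0..1}" "u3 \<in> {0..1}"
  let ?F = "star_integrand C A B" and ?F' = "star_integrand C' A B"
  have meas: "?F x y \<in> borel_measurable (lebesgue_on {0..1})" "?F' x y \<in> borel_measurable (lebesgue_on {0..1})"
    and bounded: "\<And>t. t \<in> {0<..<1} \<Longrightarrow> \<bar>?F x y t\<bar> \<le> 1" "\<And>t. t \<in> {0<..<1} \<Longrightarrow> \<bar>?F' x y t\<bar> \<le> 1"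
    and le: "\<And>t. t \<in> {0<..<1} \<Longrightarrow> ?F x y t \<le> ?F' x y t"
    if "x \<in> {0..1}" "y \<in> {0..1}" for x y
    using star_integrand_measurable[OF assms(1,3,6,7) that] star_integrand_measurable[OF assms(2,4,6,7) that]
      star_integrand_range[OF assms(1,6,7) that] star_integrand_range[OF assms(2,6,7) that]
      star_integrand_mono[OF assms(5,6,7) that] by auto
  note mono = integral_lebesgue_on_mono_interior[OF meas(1) bounded(1) meas(2) bounded(2) le]
  note tail_mono = integral_lebesgue_on_tail_mono_interior[OF meas(1) bounded(1) meas(2) bounded(2) le]
  note cong = integral_lebesgue_on_cong_interior[OF meas(1,2)]
  show "star_prod C A B u1 u2 u3 \<le> star_prod C' A B u1 u2 u3"
    unfolding star_prod_eq_integral using u by (intro mono) auto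
  have "star_prod C A B u1 u2 1 = star_prod C' A B u1 u2 1"
    unfolding star_prod_eq_integral using u
    by (intro cong) (auto simp: star_integrand_snd_one[OF assms(1,6,7)] star_integrand_snd_one[OF assms(2,6,7)])
  moreover have "star_prod C A B 1 u2 u3 = star_prod C' A B 1 u2 u3"
    unfolding star_prod_eq_integral using u
    by (intro cong) (auto simp: star_integrand_fst_one[OF assms(1,6,7)] star_integrand_fst_one[OF assms(2,6,7)])
  moreover have "star_prod C A B u1 1 u3 - star_prod C A B u1 u2 u3 \<le> star_prod C' A B u1 1 u3 - star_prod C' A B u1 u2 u3"
    unfolding star_prod_eq_integral using u by (intro tail_mono) auto
  ultimately show "surv3 (star_prod C A B) u1 u2 u3 \<le> surv3 (star_prod C' A B) u1 u2 u3"
    unfolding surv3_def by linarith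
qed

end
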